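(* In a soft aura topological space $(X,\widetilde{\tau},\mathfrak{a}_E,E)$, soft $\mathfrak{a}$-$T_1$ and soft $\mathfrak{a}$-$T_2$ are equivalent.
   Context: For a nonempty set $X$ and nonempty parameter set $E$, a soft set is a map $F:E\to\mathcal{P}(X)$, written $(F,E)$. A soft topology $\widetilde{\tau}$ is a family of soft sets containing the soft sets with all values $\emptyset$ and all values $X$, closed under arbitrary parameterwise unions and finite parameterwise intersections. A soft scope function is a map $\mathfrak{a}_E:X\to\widetilde{\tau}$ with $x\in\mathfrak{a}_E(x)(e)$ for all $x\in X,e\in E$; $(X,\widetilde{\tau},\mathfrak{a}_E,E)$ is a soft aura topological space. It is soft $\mathfrak{a}$-$T_1$ if for every pair of distinct $x,y\in X$ and every $e\in E$, $y\notin\mathfrak{a}_E(x)(e)$ and $x\notin\mathfrak{a}_E(y)(e)$; it is soft $\mathfrak{a}$-$T_2$ if for every pair of distinct $x,y\in X$ and every $e\in E$, $\mathfrak{a}_E(x)(e)\cap\mathfrak{a}_E(y)(e)=\emptyset$. *)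

theory Defs
  imports Main
begin

text \<open>A soft set over universe X with parameter set E: a map F from E to subsets of X.
  Values outside E are irrelevant; we require them to be empty for canonicity.\<close>
definition soft_set :: "'x set \<Rightarrow> 'e set \<Rightarrow> ('e \<Rightarrow> 'x set) \<Rightarrow> bool" where
  "soft_set X E F \<longleftrightarrow> (\<forall>e\<in>E. F e \<subseteq> X) \<and> (\<forall>e. e \<notin> E \<longrightarrow> F e = {})"

definition soft_null :: "'e set \<Rightarrow> 'e \<Rightarrow> 'x set" where
  "soft_null E = (\<lambda>e. {})"

definition soft_absolute :: "'x set \<Rightarrow> 'e set \<Rightarrow> 'e \<Rightarrow> 'x set" where
  "soft_absolute X E = (\<lambda>e. if e \<in> E then X else {})"

definition soft_topology :: "'x set \<Rightarrow> 'e set \<Rightarrow> ('e \<Rightarrow> 'x set) set \<Rightarrow> bool" where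
  "soft_topology X E T \<longleftrightarrow>
     (\<forall>F\<in>T. soft_set X E F) \<and>
     soft_null E \<in> T \<and> soft_absolute X E \<in> T \<and>
     (\<forall>S\<subseteq>T. (\<lambda>e. \<Union>F\<in>S. F e) \<in> T) \<and>
     (\<forall>F\<in>T. \<forall>G\<in>T. (\<lambda>e. F e \<inter> G e) \<in> T)"

definition soft_scope_function ::
    "'x set \<Rightarrow> 'e set \<Rightarrow> ('e \<Rightarrow> 'x set) set \<Rightarrow> ('x \<Rightarrow> 'e \<Rightarrow> 'x set) \<Rightarrow> bool" where
  "soft_scope_function X E T a \<longleftrightarrow> (\<forall>x\<in>X. a x \<in> T \<and> (\<forall>e\<in>E. x \<in> a x e))"

definition soft_aura_space ::
    "'x set \<Rightarrow> ('e \<Rightarrow> 'x set) set \<Rightarrow> ('x \<Rightarrow> 'e \<Rightarrow> 'x set) \<Rightarrow> 'e set \<Rightarrow> bool" where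
  "soft_aura_space X T a E \<longleftrightarrow> X \<noteq> {} \<and> E \<noteq> {} \<and> soft_topology X E T \<and> soft_scope_function X E T a"

definition soft_a_T1 :: "'x set \<Rightarrow> ('x \<Rightarrow> 'e \<Rightarrow> 'x set) \<Rightarrow> 'e set \<Rightarrow> bool" where
  "soft_a_T1 X a E \<longleftrightarrow> (\<forall>x\<in>X. \<forall>y\<in>X. x \<noteq> y \<longrightarrow> (\<forall>e\<in>E. y \<notin> a x e \<and> x \<notin> a y e))"

definition soft_a_T2 :: "'x set \<Rightarrow> ('x \<Rightarrow> 'e \<Rightarrow> 'x set) \<Rightarrow> 'e set \<Rightarrow> bool" where
  "soft_a_T2 X a E \<longleftrightarrow> (\<forall>x\<in>X. \<forall>y\<in>X. x \<noteq> y \<longrightarrow> (\<forall>e\<in>E. a x e \<inter> a y e = {}))"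

end

theory Submission
  imports Defs
begin

text \<open>Every scope is a subset of X containing its own point. Hence both separation axioms
  say exactly that every scope \<open>a x e\<close> is the singleton \<open>{x}\<close>.\<close>

lemma soft_aura_space_scope:
  assumes "soft_aura_space X T a E" and "x \<in> X" and "e \<in> E"
  shows "x \<in> a x e" and "a x e \<subseteq> X"
proof -
  have "a x \<in> T" and "x \<in> a x e"
    using assms unfolding soft_aura_space_def soft_scope_function_def by auto
  moreover have "soft_set X E (a x)"
    using assms(1) \<open>a x \<in> T\<close> unfolding soft_aura_space_def soft_topology_def by auto
  ultimately show "x \<in> a x e" and "a x e \<subseteq> X"
    using \<open>e \<in> E\<close> unfolding soft_set_def by auto
qed

lemma soft_a_T1_iff_scope_singleton:
  assumes "\<And>x e. x \<in> X \<Longrightarrow> e \<in> E \<Longrightarrow> x \<in> a x e \<and> a x e \<subseteq> X"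
  shows "soft_a_T1 X a E \<longleftrightarrow> (\<forall>x\<in>X. \<forall>e\<in>E. a x e = {x})"
proof
  assume T1: "soft_a_T1 X a E"
  show "\<forall>x\<in>X. \<forall>e\<in>E. a x e = {x}"
  proof (intro ballI)
    fix x e assume "x \<in> X" "e \<in> E"
    have "y = x" if "y \<in> a x e" for y
      using T1 assms \<open>x \<in> X\<close> \<open>e \<in> E\<close> that unfolding soft_a_T1_def by blast
    then show "a x e = {x}" using assms \<open>x \<in> X\<close> \<open>e \<in> E\<close> by blast
  qed
next
  assume "\<forall>x\<in>X. \<forall>e\<in>E. a x e = {x}"
  then show "soft_a_T1 X a E" unfolding soft_a_T1_def by auto
qed

lemma soft_a_T2_iff_scope_singleton:
  assumes "\<And>x e. x \<in> X \<Longrightarrow> e \<in> E \<Longrightarrow> x \<in> a x e \<and> a x e \<subseteq> X"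
  shows "soft_a_T2 X a E \<longleftrightarrow> (\<forall>x\<in>X. \<forall>e\<in>E. a x e = {x})"
proof
  assume T2: "soft_a_T2 X a E"
  show "\<forall>x\<in>X. \<forall>e\<in>E. a x e = {x}"
  proof (intro ballI)
    fix x e assume "x \<in> X" "e \<in> E"
    have "y = x" if "y \<in> a x e" for y
    proof -
      have "y \<in> X" and "y \<in> a y e" using assms \<open>x \<in> X\<close> \<open>e \<in> E\<close> that by blast+
      then show "y = x" using T2 \<open>x \<in> X\<close> \<open>e \<in> E\<close> that unfolding soft_a_T2_def by blast
    qed
    then show "a x e = {x}" using assms \<open>x \<in> X\<close> \<open>e \<in> E\<close> by blast
  qed
next
  assume "\<forall>x\<in>X. \<forall>e\<in>E. a x e = {x}"
  then show "soft_a_T2 X a E" unfolding soft_a_T2_def by auto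
qed

theorem proposition6p3:
  assumes "soft_aura_space X T a E"
  shows "soft_a_T1 X a E \<longleftrightarrow> soft_a_T2 X a E"
proof -
  have scope: "\<And>x e. x \<in> X \<Longrightarrow> e \<in> E \<Longrightarrow> x \<in> a x e \<and> a x e \<subseteq> X"
    using soft_aura_space_scope[OF assms] by blast
  show ?thesis
    using soft_a_T1_iff_scope_singleton[of X E a, OF scope]
      soft_a_T2_iff_scope_singleton[of X E a, OF scope]
    by simp
qed

end
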